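(* Let $D$ be a friendship digraph. If there is a vertex $v$ of $D$ such that $N^+(v)=V(D)-\{v\}$, then every vertex of $D$ other than $v$ has outdegree $2$.
   Context: All digraphs are finite and have neither loops nor parallel arcs (a pair of opposite arcs $(u,v)$ and $(v,u)$ is allowed). $N^+(v)$ denotes the set of out-neighbors of $v$. A friendship digraph is a nontrivial digraph (at least two vertices) in which any two distinct vertices have exactly one common out-neighbor. *)

theory Defs
  imports Main
begin

definition digraph :: "'a set \<Rightarrow> ('a \<times> 'a) set \<Rightarrow> bool" where
  "digraph V A \<longleftrightarrow> finite V \<and> A \<subseteq> V \<times> V \<and> (\<forall>v. (v, v) \<notin> A)"

definition out_nbrs :: "('a \<times> 'a) set \<Rightarrow> 'a \<Rightarrow> 'a set" where
  "out_nbrs A v = {w. (v, w) \<in> A}"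

definition outdeg :: "('a \<times> 'a) set \<Rightarrow> 'a \<Rightarrow> nat" where
  "outdeg A v = card (out_nbrs A v)"

definition friendship_digraph :: "'a set \<Rightarrow> ('a \<times> 'a) set \<Rightarrow> bool" where
  "friendship_digraph V A \<longleftrightarrow> digraph V A \<and> card V \<ge> 2 \<and>
     (\<forall>x\<in>V. \<forall>y\<in>V. x \<noteq> y \<longrightarrow> (\<exists>!z. z \<in> out_nbrs A x \<inter> out_nbrs A y))"

end

theory Submission
  imports Defs
begin

text \<open>For u \<noteq> v the out-neighbourhood of v is everything but v, so the unique common
out-neighbour w of u and v is the only out-neighbour of u besides possibly v. But no vertex
of a friendship digraph has a single out-neighbour w: the common out-neighbour of it and w
would be w itself, a loop. Hence the out-neighbours of u are exactly v and w.\<close>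

lemma friendship_digraph_imp_digraph: "friendship_digraph V A \<Longrightarrow> digraph V A"
  unfolding friendship_digraph_def by simp

lemma out_nbrs_subset_vertices: "digraph V A \<Longrightarrow> out_nbrs A x \<subseteq> V"
  unfolding digraph_def out_nbrs_def by blast

lemma not_in_own_out_nbrs: "digraph V A \<Longrightarrow> x \<notin> out_nbrs A x"
  unfolding digraph_def out_nbrs_def by blast

lemma friendship_common_out_nbr:
  assumes "friendship_digraph V A" "x \<in> V" "y \<in> V" "x \<noteq> y"
  obtains z where "out_nbrs A x \<inter> out_nbrs A y = {z}"
  using assms unfolding friendship_digraph_def by blast

lemma friendship_out_nbrs_not_singleton:
  assumes fd: "friendship_digraph V A" and "x \<in> V"
  shows "out_nbrs A x \<noteq> {w}"
proof
  assume single: "out_nbrs A x = {w}"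
  have dg: "digraph V A" using fd by (rule friendship_digraph_imp_digraph)
  have "w \<in> V" "w \<noteq> x"
    using single out_nbrs_subset_vertices[OF dg] not_in_own_out_nbrs[OF dg, of x] by auto
  then obtain z where "out_nbrs A x \<inter> out_nbrs A w = {z}"
    using friendship_common_out_nbr[OF fd \<open>x \<in> V\<close>] by metis
  then have "w \<in> out_nbrs A w" using single by auto
  then show False using not_in_own_out_nbrs[OF dg] by blast
qed

theorem corollary2p3:
  assumes "friendship_digraph V A"
    and "v \<in> V"
    and "out_nbrs A v = V - {v}"
  shows "\<forall>u\<in>V - {v}. outdeg A u = 2"
proof
  fix u assume u: "u \<in> V - {v}"
  have dg: "digraph V A" using assms(1) by (rule friendship_digraph_imp_digraph)
  obtain w where w: "out_nbrs A u \<inter> out_nbrs A v = {w}"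
    using friendship_common_out_nbr[OF assms(1), of u v] u assms(2) by blast
  have "w \<noteq> v" using w assms(3) by auto
  have "out_nbrs A u \<subseteq> {v, w}"
    using w assms(3) out_nbrs_subset_vertices[OF dg, of u] by auto
  moreover have "out_nbrs A u \<noteq> {w}"
    using friendship_out_nbrs_not_singleton[OF assms(1)] u by blast
  ultimately have "out_nbrs A u = {v, w}" using w by blast
  then show "outdeg A u = 2" unfolding outdeg_def using \<open>w \<noteq> v\<close> by simp
qed

end
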